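(* For $a,s\in\mathbb C$, $(a,s/2)\in\overline{\mathbb B}_2$ if and only if there exists $p\in\mathbb T$ such that $(a,s,p)\in\overline{\mathbb P}$.
   Context: The pentablock is $\mathbb P=\{(a_{21},\operatorname{tr}A_0,\det A_0): A_0=[a_{ij}]\in M_2(\mathbb C),\ \|A_0\|<1\}\subset\mathbb C^3$ with closure $\overline{\mathbb P}$. $\overline{\mathbb B}_2$ is the closed Euclidean unit ball in $\mathbb C^2$ and $\mathbb T$ the unit circle. *)

theory Defs
  imports "HOL-Analysis.Analysis"
begin

definition mat_opnorm :: "complex^2^2 \<Rightarrow> real" where
  "mat_opnorm A = onorm (\<lambda>x::complex^2. A *v x)"

definition pentablock :: "(complex \<times> complex \<times> complex) set" where
  "pentablock = {(A $ 2 $ 1, trace A, det A) | A :: complex^2^2. mat_opnorm A < 1}"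

end

theory Submission
  imports Defs
begin

text \<open>
  If \<open>\<parallel>A\<parallel> \<le> 1\<close>, the first column and the second row of \<open>A\<close> have norm at most 1, so
  \<open>|a\<^sub>1\<^sub>1|\<^sup>2, |a\<^sub>2\<^sub>2|\<^sup>2 \<le> 1 - |a\<^sub>2\<^sub>1|\<^sup>2\<close> and hence \<open>|tr A|\<^sup>2/4 \<le> 1 - |a\<^sub>2\<^sub>1|\<^sup>2\<close>; this closed condition
  passes to the closure of the pentablock. Conversely, when \<open>|a|\<^sup>2 + |s|\<^sup>2/4 \<le> 1\<close> one finds
  \<open>\<alpha>\<close> and \<open>p \<in> \<T>\<close> with \<open>|\<alpha>|\<^sup>2 + |a|\<^sup>2 = 1\<close> and \<open>\<alpha> + p \<alpha>\<^sup>* = s\<close>; the unitary matrix with first column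
  \<open>(\<alpha>, a)\<close> and determinant \<open>p\<close> has trace \<open>s\<close>, and its multiples by \<open>t < 1\<close> lie in the pentablock
  and tend to \<open>(a, s, p)\<close>.
\<close>

lemma norm_vec2_squared:
  fixes x :: "'a::real_normed_vector^2"
  shows "(norm x)\<^sup>2 = (norm (x$1))\<^sup>2 + (norm (x$2))\<^sup>2"
  by (simp add: norm_vec_def L2_set_def sum_2)

lemma norm_column_le_onorm:
  fixes A :: "complex^'n^'m"
  shows "norm (column j A) \<le> onorm ((*v) A)"
proof -
  have "A *v axis j 1 = column j A"
    by (simp add: matrix_vector_mult_def column_def axis_def vec_eq_iff if_distrib cong: if_cong)
  moreover have "norm (axis j (1::complex)) = 1"
    unfolding norm_vec_def L2_set_def axis_def
    by (simp add: if_distrib[of norm] if_distrib[of "\<lambda>x. x\<^sup>2"] cong: if_cong)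
  ultimately show ?thesis
    using onorm[OF matrix_vector_mul_bounded_linear, of A "axis j 1"] by simp
qed

lemma norm_row_le_onorm:
  fixes A :: "complex^'n^'m"
  shows "norm (row i A) \<le> onorm ((*v) A)"
proof -
  define v where "v = (\<chi> k. cnj (A$i$k))"
  have nv: "norm v = norm (row i A)"
    by (simp add: v_def norm_vec_def row_def)
  have "(norm (row i A))\<^sup>2 = (\<Sum>k\<in>UNIV. (cmod (A$i$k))\<^sup>2)"
    by (simp add: norm_vec_def L2_set_def row_def sum_nonneg)
  then have "(A *v v)$i = of_real ((norm (row i A))\<^sup>2)"
    by (simp add: v_def matrix_vector_mult_def flip: complex_norm_square)
  then have "(norm (row i A))\<^sup>2 \<le> norm (A *v v)"
    using Finite_Cartesian_Product.norm_nth_le[of "A *v v" i] by (simp add: norm_power)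
  also have "\<dots> \<le> onorm ((*v) A) * norm (row i A)"
    using onorm[OF matrix_vector_mul_bounded_linear] nv by metis
  finally show ?thesis
    using onorm_pos_le[OF matrix_vector_mul_bounded_linear, of A]
    by (cases "row i A = 0") (auto simp: power2_eq_square)
qed

lemma contraction_entry_trace_bound:
  fixes A :: "complex^2^2"
  assumes "mat_opnorm A \<le> 1"
  shows "(cmod (A$2$1))\<^sup>2 + (cmod (trace A))\<^sup>2 / 4 \<le> 1"
proof -
  have "norm (column 1 A) \<le> 1" "norm (row 2 A) \<le> 1"
    using assms norm_column_le_onorm[of 1 A] norm_row_le_onorm[of 2 A]
    by (simp_all add: mat_opnorm_def)
  then have col: "(cmod (A$1$1))\<^sup>2 + (cmod (A$2$1))\<^sup>2 \<le> 1"
    and row: "(cmod (A$2$1))\<^sup>2 + (cmod (A$2$2))\<^sup>2 \<le> 1"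
    using power_le_one[of "norm (column 1 A)" 2] power_le_one[of "norm (row 2 A)" 2]
    by (simp_all add: norm_vec2_squared column_def row_def)
  have "cmod (trace A) \<le> cmod (A$1$1) + cmod (A$2$2)"
    by (simp add: trace_def sum_2 norm_triangle_ineq)
  then have "(cmod (trace A))\<^sup>2 \<le> 2 * ((cmod (A$1$1))\<^sup>2 + (cmod (A$2$2))\<^sup>2)"
    by (smt (verit) norm_ge_zero power_mono sum_squares_bound power2_sum)
  with col row show ?thesis
    by simp
qed

lemma closure_pentablock_bound:
  assumes "(a, s, p) \<in> closure pentablock"
  shows "(cmod a)\<^sup>2 + (cmod s)\<^sup>2 / 4 \<le> 1"
proof -
  let ?C = "{z. (cmod (fst z))\<^sup>2 + (cmod (fst (snd z)))\<^sup>2 / 4 \<le> 1}"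
  have "closed ?C"
    by (intro closed_Collect_le continuous_intros) auto
  moreover have "pentablock \<subseteq> ?C"
    using contraction_entry_trace_bound by (auto simp: pentablock_def)
  ultimately have "closure pentablock \<subseteq> ?C"
    by (rule closure_minimal[rotated])
  with assms show ?thesis
    by auto
qed

lemma exists_add_mult_cnj_eq:
  fixes s :: complex and r :: real
  assumes "0 \<le> r" "cmod s \<le> 2 * r"
  shows "\<exists>\<alpha> p. cmod \<alpha> = r \<and> cmod p = 1 \<and> \<alpha> + p * cnj \<alpha> = s"
proof -
  txt \<open>\<open>\<alpha>\<close> lies on the perpendicular bisector of \<open>[0, s]\<close> at distance \<open>r\<close> from 0, so \<open>|s - \<alpha>| = |\<alpha>|\<close>.\<close>
  define h where "h = sqrt (r\<^sup>2 - (cmod s)\<^sup>2 / 4)"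
  define u where "u = (if s = 0 then 1 else sgn s)"
  define \<alpha> where "\<alpha> = u * Complex (cmod s / 2) h"
  have "(cmod s / 2)\<^sup>2 \<le> r\<^sup>2"
    using assms by (intro power_mono) auto
  then have h2: "h\<^sup>2 = r\<^sup>2 - (cmod s)\<^sup>2 / 4"
    by (simp add: h_def power_divide)
  have u: "cmod u = 1" "s = u * Complex (cmod s) 0"
    by (auto simp: u_def norm_sgn complex_eq_iff sgn_div_norm)
  have "s - \<alpha> = u * Complex (cmod s) 0 - \<alpha>"
    by (metis u(2))
  also have "\<dots> = u * Complex (cmod s / 2) (- h)"
    unfolding \<alpha>_def right_diff_distrib[symmetric] by (simp add: complex_eq_iff)
  finally have "cmod (s - \<alpha>) = cmod \<alpha>"
    by (simp add: \<alpha>_def norm_mult u(1) complex_norm)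
  have "cmod \<alpha> = r"
    using h2 assms(1) by (simp add: \<alpha>_def norm_mult u(1) complex_norm power_divide real_sqrt_unique)
  define p where "p = (if \<alpha> = 0 then 1 else (s - \<alpha>) / cnj \<alpha>)"
  have "cmod p = 1" "\<alpha> + p * cnj \<alpha> = s"
    using \<open>cmod (s - \<alpha>) = cmod \<alpha>\<close> by (auto simp: p_def norm_divide)
  then show ?thesis
    using \<open>cmod \<alpha> = r\<close> by blast
qed

definition unitary_block :: "complex \<Rightarrow> complex \<Rightarrow> complex \<Rightarrow> complex^2^2" where
  "unitary_block \<alpha> a p = vector [vector [\<alpha>, - p * cnj a], vector [a, p * cnj \<alpha>]]"

lemma
  assumes "cmod p = 1" "(cmod \<alpha>)\<^sup>2 + (cmod a)\<^sup>2 = 1"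
  shows norm_unitary_block_mult: "norm (unitary_block \<alpha> a p *v x) = norm x"
    and trace_unitary_block: "trace (unitary_block \<alpha> a p) = \<alpha> + p * cnj \<alpha>"
    and det_unitary_block: "det (unitary_block \<alpha> a p) = p"
proof -
  have p: "p * cnj p = 1"
    using assms(1) by (simp flip: complex_norm_square)
  have \<alpha>a: "\<alpha> * cnj \<alpha> + a * cnj a = 1"
    using assms(2) by (metis complex_norm_square of_real_1 of_real_add)
  let ?y = "unitary_block \<alpha> a p *v x"
  have "?y$1 * cnj (?y$1) + ?y$2 * cnj (?y$2)
        = (\<alpha> * cnj \<alpha> + a * cnj a) * (x$1 * cnj (x$1) + (p * cnj p) * (x$2 * cnj (x$2)))"
    by (simp add: unitary_block_def matrix_vector_mult_def sum_2 algebra_simps)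
  also have "\<dots> = x$1 * cnj (x$1) + x$2 * cnj (x$2)"
    by (simp only: p \<alpha>a mult_1_left)
  finally have "complex_of_real ((norm ?y)\<^sup>2) = of_real ((norm x)\<^sup>2)"
    by (simp only: norm_vec2_squared of_real_add complex_norm_square)
  then have "(norm ?y)\<^sup>2 = (norm x)\<^sup>2"
    by (simp only: of_real_eq_iff)
  then show "norm ?y = norm x"
    by (simp add: power2_eq_iff_nonneg)
  show "trace (unitary_block \<alpha> a p) = \<alpha> + p * cnj \<alpha>"
    by (simp add: unitary_block_def trace_def sum_2)
  have "det (unitary_block \<alpha> a p) = p * (\<alpha> * cnj \<alpha> + a * cnj a)"
    by (simp add: unitary_block_def det_2 algebra_simps)
  then show "det (unitary_block \<alpha> a p) = p"
    by (simp add: \<alpha>a)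
qed

lemma scaled_unitary_in_pentablock:
  assumes "cmod p = 1" "(cmod \<alpha>)\<^sup>2 + (cmod a)\<^sup>2 = 1" "0 \<le> t" "t < 1"
  shows "(t *\<^sub>R a, t *\<^sub>R (\<alpha> + p * cnj \<alpha>), t\<^sup>2 *\<^sub>R p) \<in> pentablock"
proof -
  define B where "B = t *\<^sub>R unitary_block \<alpha> a p"
  have "B *v x = t *\<^sub>R (unitary_block \<alpha> a p *v x)" for x
    by (simp add: B_def matrix_vector_mult_def vec_eq_iff scaleR_sum_right)
  then have "norm (B *v x) = t * norm x" for x
    using assms by (simp add: norm_unitary_block_mult)
  then have "mat_opnorm B \<le> t"
    unfolding mat_opnorm_def by (intro onorm_le) simp
  then have "mat_opnorm B < 1"
    using assms(4) by simp
  moreover have "B $ 2 $ 1 = t *\<^sub>R a"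
    by (simp add: B_def unitary_block_def)
  moreover have "trace B = t *\<^sub>R trace (unitary_block \<alpha> a p)"
    by (simp add: B_def trace_def sum_2 scaleR_right_distrib)
  moreover have "det B = t\<^sup>2 *\<^sub>R p"
    using det_unitary_block[OF assms(1,2)] by (simp add: B_def det_2 power2_eq_square algebra_simps)
  ultimately show ?thesis
    unfolding pentablock_def using trace_unitary_block[OF assms(1,2)] by force
qed

lemma unitary_boundary_in_closure_pentablock:
  assumes "cmod p = 1" "(cmod \<alpha>)\<^sup>2 + (cmod a)\<^sup>2 = 1"
  shows "(a, \<alpha> + p * cnj \<alpha>, p) \<in> closure pentablock"
proof -
  define f where "f t = (t *\<^sub>R a, t *\<^sub>R (\<alpha> + p * cnj \<alpha>), t\<^sup>2 *\<^sub>R p)" for t :: real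
  have "f ` closure {0..<1} \<subseteq> closure pentablock"
  proof (rule image_closure_subset)
    show "continuous_on (closure {0..<1}) f"
      unfolding f_def by (intro continuous_intros)
    show "f ` {0..<1} \<subseteq> closure pentablock"
      using scaled_unitary_in_pentablock[OF assms] closure_subset by (force simp: f_def)
  qed simp
  moreover have "f 1 = (a, \<alpha> + p * cnj \<alpha>, p)"
    by (simp add: f_def)
  moreover have "1 \<in> closure {0..<1::real}"
    by simp
  ultimately show ?thesis
    by (metis image_subset_iff)
qed

lemma exists_unimodular_in_closure_pentablock:
  assumes "(cmod a)\<^sup>2 + (cmod s)\<^sup>2 / 4 \<le> 1"
  shows "\<exists>p. cmod p = 1 \<and> (a, s, p) \<in> closure pentablock"
proof -
  define r where "r = sqrt (1 - (cmod a)\<^sup>2)"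
  have "(cmod a)\<^sup>2 \<le> 1"
    using assms zero_le_power2[of "cmod s"] by linarith
  then have r: "r\<^sup>2 + (cmod a)\<^sup>2 = 1" "0 \<le> r"
    by (simp_all add: r_def)
  have "cmod s / 2 \<le> r"
    unfolding r_def using assms by (intro real_le_rsqrt) (simp add: power_divide)
  then obtain \<alpha> p where "cmod \<alpha> = r" "cmod p = 1" "\<alpha> + p * cnj \<alpha> = s"
    using exists_add_mult_cnj_eq[of r s] r(2) by auto
  then show ?thesis
    using unitary_boundary_in_closure_pentablock[of p \<alpha> a] r(1) by auto
qed

theorem mainTheorem10:
  fixes a s :: complex
  shows "(a, s / 2) \<in> cball (0 :: complex \<times> complex) 1 \<longleftrightarrow>
         (\<exists>p. cmod p = 1 \<and> (a, s, p) \<in> closure pentablock)"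
proof -
  have "(a, s / 2) \<in> cball 0 1 \<longleftrightarrow> (cmod a)\<^sup>2 + (cmod s)\<^sup>2 / 4 \<le> 1"
    by (simp add: norm_Pair norm_divide power_divide)
  then show ?thesis
    using exists_unimodular_in_closure_pentablock closure_pentablock_bound by blast
qed

end
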